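(* Let $R$ be a commutative Noetherian ring of prime characteristic $p$ and $G$ an $x$-torsion-free left $R[x,f]$-module. Then both the set $\mathcal{A}(G)$ of special annihilator submodules of $G$ and the set $\mathcal{I}(G)$ of $G$-special $R$-ideals are closed under arbitrary intersections.
   Context: $R[x,f]$ is the Frobenius skew polynomial ring: free left $R$-module on $(x^i)_{i\ge0}$, $xr=r^px$. $x$-torsion-free: $xg=0\Rightarrow g=0$. A special annihilator submodule of $G$ is one of the form $\{g:\theta g=0\ \forall\theta\in\mathfrak{B}\}$ for a graded two-sided ideal $\mathfrak{B}=\bigoplus_n\mathfrak{b}_nx^n$ ($(\mathfrak{b}_n)$ an ascending chain of ideals). $\operatorname{grann}N$ is the set of $\sum r_ix^i$ with each $r_ix^i$ annihilating $N$. $\mathcal{I}(G)$ is the set of ideals $\mathfrak{b}$ of $R$ with $\operatorname{grann}N=\bigoplus_n\mathfrak{b}x^n$ for some $R[x,f]$-submodule $N$ of $G$. *)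

theory Defs
  imports Main "HOL.Modules" "HOL-Computational_Algebra.Primes"
begin

text \<open>Ideals of a commutative ring (type-class idiom: the ring is the whole type).\<close>
definition is_ideal :: "'a::comm_ring_1 set \<Rightarrow> bool" where
  "is_ideal I \<longleftrightarrow> 0 \<in> I \<and> (\<forall>a\<in>I. \<forall>b\<in>I. a + b \<in> I) \<and> (\<forall>r. \<forall>a\<in>I. r * a \<in> I)"

definition noetherian_ring :: "'a::comm_ring_1 itself \<Rightarrow> bool" where
  "noetherian_ring _ \<longleftrightarrow>
     (\<forall>I :: nat \<Rightarrow> 'a set. (\<forall>n. is_ideal (I n)) \<and> (\<forall>n. I n \<subseteq> I (Suc n))
        \<longrightarrow> (\<exists>m. \<forall>n\<ge>m. I n = I m))"

text \<open>A left module over the Frobenius skew polynomial ring R[x,f], R of characteristic p: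
  an R-module G (scalar action smul) together with the action X of x, which is additive
  and satisfies x (r g) = r^p (x g), i.e. x r = r^p x.\<close>
definition frob_skew_module ::
  "('a::comm_ring_1 \<Rightarrow> 'g::ab_group_add \<Rightarrow> 'g) \<Rightarrow> ('g \<Rightarrow> 'g) \<Rightarrow> bool" where
  "frob_skew_module smul X \<longleftrightarrow>
     module smul \<and> (\<forall>g h. X (g + h) = X g + X h) \<and>
     (\<forall>r g. X (smul r g) = smul (r ^ CHAR('a)) (X g))"

definition x_torsion_free :: "('g::ab_group_add \<Rightarrow> 'g) \<Rightarrow> bool" where
  "x_torsion_free X \<longleftrightarrow> (\<forall>g. X g = 0 \<longrightarrow> g = 0)"

text \<open>Elements of R[x,f] are represented by their coefficient sequences
  \<open>\<theta> :: nat \<Rightarrow> 'a\<close> (\<open>\<theta> = \<Sum> \<theta> n x^n\<close>) with finite support.\<close>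
definition skew_poly :: "(nat \<Rightarrow> 'a::zero) \<Rightarrow> bool" where
  "skew_poly \<theta> \<longleftrightarrow> finite {n. \<theta> n \<noteq> 0}"

definition skew_act ::
  "('a::comm_ring_1 \<Rightarrow> 'g::ab_group_add \<Rightarrow> 'g) \<Rightarrow> ('g \<Rightarrow> 'g) \<Rightarrow> (nat \<Rightarrow> 'a) \<Rightarrow> 'g \<Rightarrow> 'g" where
  "skew_act smul X \<theta> g = (\<Sum>n\<in>{n. \<theta> n \<noteq> 0}. smul (\<theta> n) ((X ^^ n) g))"

definition skew_submodule ::
  "('a::comm_ring_1 \<Rightarrow> 'g::ab_group_add \<Rightarrow> 'g) \<Rightarrow> ('g \<Rightarrow> 'g) \<Rightarrow> 'g set \<Rightarrow> bool" where
  "skew_submodule smul X N \<longleftrightarrow> module.subspace smul N \<and> (\<forall>g\<in>N. X g \<in> N)"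

definition graded_ideal_of :: "(nat \<Rightarrow> 'a::comm_ring_1 set) \<Rightarrow> (nat \<Rightarrow> 'a) set" where
  "graded_ideal_of b = {\<theta>. skew_poly \<theta> \<and> (\<forall>n. \<theta> n \<in> b n)}"

text \<open>Sequences (b_n) giving graded two-sided ideals: ascending chains of ideals.\<close>
definition graded_ideal_seq :: "(nat \<Rightarrow> 'a::comm_ring_1 set) \<Rightarrow> bool" where
  "graded_ideal_seq b \<longleftrightarrow> (\<forall>n. is_ideal (b n)) \<and> (\<forall>n. b n \<subseteq> b (Suc n))"

definition ann_G ::
  "('a::comm_ring_1 \<Rightarrow> 'g::ab_group_add \<Rightarrow> 'g) \<Rightarrow> ('g \<Rightarrow> 'g) \<Rightarrow> (nat \<Rightarrow> 'a) set \<Rightarrow> 'g set" where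
  "ann_G smul X B = {g. \<forall>\<theta>\<in>B. skew_act smul X \<theta> g = 0}"

definition special_ann_submodules ::
  "('a::comm_ring_1 \<Rightarrow> 'g::ab_group_add \<Rightarrow> 'g) \<Rightarrow> ('g \<Rightarrow> 'g) \<Rightarrow> 'g set set" where
  "special_ann_submodules smul X =
     {ann_G smul X (graded_ideal_of b) | b. graded_ideal_seq b}"

definition grann ::
  "('a::comm_ring_1 \<Rightarrow> 'g::ab_group_add \<Rightarrow> 'g) \<Rightarrow> ('g \<Rightarrow> 'g) \<Rightarrow> 'g set \<Rightarrow> (nat \<Rightarrow> 'a) set" where
  "grann smul X N = {\<theta>. skew_poly \<theta> \<and> (\<forall>i. \<forall>g\<in>N. smul (\<theta> i) ((X ^^ i) g) = 0)}"

definition special_ideals ::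
  "('a::comm_ring_1 \<Rightarrow> 'g::ab_group_add \<Rightarrow> 'g) \<Rightarrow> ('g \<Rightarrow> 'g) \<Rightarrow> 'a set set" where
  "special_ideals smul X =
     {\<bb>. is_ideal \<bb> \<and> (\<exists>N. skew_submodule smul X N \<and>
                          grann smul X N = graded_ideal_of (\<lambda>_. \<bb>))}"

end

theory Submission
  imports Defs
begin

text \<open>Annihilators turn sums into intersections. An intersection of special annihilator
  submodules \<open>ann(\<B>\<^sub>i)\<close> is the annihilator of the graded ideal whose degree-\<open>n\<close>
  component is the ideal generated by the degree-\<open>n\<close> components of all the \<open>\<B>\<^sub>i\<close>.
  Dually, if \<open>grann N\<^sub>i = \<Oplus> \<bb>\<^sub>i x\<^sup>n\<close>, then the sum \<open>N = \<Sum> N\<^sub>i\<close> is again an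
  \<open>R[x,f]\<close>-submodule (since \<open>x\<close> acts additively and Frobenius-semilinearly) with
  \<open>grann N = \<Inter> grann N\<^sub>i = \<Oplus> (\<Inter> \<bb>\<^sub>i) x\<^sup>n\<close>.\<close>

lemma is_ideal_Inter: "\<forall>I\<in>\<I>. is_ideal I \<Longrightarrow> is_ideal (\<Inter>\<I>)"
  unfolding is_ideal_def by auto

lemma is_ideal_hull: "is_ideal (is_ideal hull A)"
  by (rule hull_in) (rule is_ideal_Inter)

lemma graded_ideal_seq_hull_UN:
  assumes "\<forall>i\<in>I. graded_ideal_seq (b i)"
  shows "graded_ideal_seq (\<lambda>n. is_ideal hull (\<Union>i\<in>I. b i n))"
  unfolding graded_ideal_seq_def
proof (intro allI conjI)
  fix n
  show "is_ideal (is_ideal hull (\<Union>i\<in>I. b i n))" by (rule is_ideal_hull)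
  have "(\<Union>i\<in>I. b i n) \<subseteq> (\<Union>i\<in>I. b i (Suc n))"
    using assms unfolding graded_ideal_seq_def by blast
  then show "is_ideal hull (\<Union>i\<in>I. b i n) \<subseteq> is_ideal hull (\<Union>i\<in>I. b i (Suc n))"
    by (rule hull_mono)
qed

context module
begin

lemma is_ideal_annihilator: "is_ideal {r. r *s g = 0}"
  unfolding is_ideal_def by (auto simp: scale_left_distrib simp flip: scale_scale)

lemma mem_ann_G_graded_ideal_of_iff:
  assumes "\<forall>n. 0 \<in> b n"
  shows "g \<in> ann_G scale X (graded_ideal_of b) \<longleftrightarrow> (\<forall>n. \<forall>r\<in>b n. r *s (X ^^ n) g = 0)"
proof
  assume g: "g \<in> ann_G scale X (graded_ideal_of b)"
  show "\<forall>n. \<forall>r\<in>b n. r *s (X ^^ n) g = 0"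
  proof (intro allI ballI)
    fix n r assume r: "r \<in> b n"
    define \<theta> where "\<theta> = (\<lambda>k. if k = n then r else 0)"
    have "{k. \<theta> k \<noteq> 0} \<subseteq> {n}" by (auto simp: \<theta>_def)
    with assms r have "\<theta> \<in> graded_ideal_of b"
      unfolding graded_ideal_of_def skew_poly_def by (auto simp: \<theta>_def finite_subset)
    with g have "skew_act scale X \<theta> g = 0" unfolding ann_G_def by blast
    moreover have "skew_act scale X \<theta> g = r *s (X ^^ n) g"
      by (cases "r = 0") (simp_all add: skew_act_def \<theta>_def)
    ultimately show "r *s (X ^^ n) g = 0" by simp
  qed
next
  assume "\<forall>n. \<forall>r\<in>b n. r *s (X ^^ n) g = 0"
  then show "g \<in> ann_G scale X (graded_ideal_of b)"
    unfolding ann_G_def skew_act_def graded_ideal_of_def by (auto intro!: sum.neutral)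
qed

lemma ann_G_graded_ideal_of_hull_UN:
  assumes "\<forall>i\<in>I. graded_ideal_seq (b i)"
  shows "ann_G scale X (graded_ideal_of (\<lambda>n. is_ideal hull (\<Union>i\<in>I. b i n)))
       = (\<Inter>i\<in>I. ann_G scale X (graded_ideal_of (b i)))"
proof -
  have zero: "0 \<in> b i n" if "i \<in> I" for i n
    using assms that unfolding graded_ideal_seq_def is_ideal_def by blast
  have "(\<forall>r\<in>is_ideal hull (\<Union>i\<in>I. b i n). r *s h = 0) \<longleftrightarrow> (\<forall>i\<in>I. \<forall>r\<in>b i n. r *s h = 0)"
    for n and h :: 'b
    using hull_minimal[of "\<Union>i\<in>I. b i n" "{r. r *s h = 0}" is_ideal]
      is_ideal_annihilator hull_subset[of "\<Union>i\<in>I. b i n" is_ideal] by blast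
  moreover have "0 \<in> is_ideal hull A" for A :: "'a set"
    using is_ideal_hull unfolding is_ideal_def by blast
  ultimately show ?thesis
    by (auto simp: mem_ann_G_graded_ideal_of_iff zero)
qed

lemma special_ann_submodules_Inter:
  assumes "S \<subseteq> special_ann_submodules scale X"
  shows "\<Inter>S \<in> special_ann_submodules scale X"
proof -
  obtain b where b: "\<And>M. M \<in> S \<Longrightarrow> graded_ideal_seq (b M) \<and> M = ann_G scale X (graded_ideal_of (b M))"
    using assms unfolding special_ann_submodules_def by (simp add: subset_iff, metis)
  then have "\<Inter>S = ann_G scale X (graded_ideal_of (\<lambda>n. is_ideal hull (\<Union>M\<in>S. b M n)))"
    by (subst ann_G_graded_ideal_of_hull_UN) auto
  with b graded_ideal_seq_hull_UN[of S b] show ?thesis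
    unfolding special_ann_submodules_def by blast
qed

lemma funpow_frob_add:
  assumes "frob_skew_module scale X"
  shows "(X ^^ i) (g + h) = (X ^^ i) g + (X ^^ i) h"
  using assms unfolding frob_skew_module_def by (induction i) simp_all

lemma funpow_frob_scale:
  assumes "frob_skew_module scale X"
  shows "(X ^^ i) (r *s g) = (r ^ CHAR('a) ^ i) *s (X ^^ i) g"
  using assms unfolding frob_skew_module_def
  by (induction i) (simp_all add: power_mult[symmetric] mult.commute)

lemma subspace_vimage_funpow_frob:
  assumes "frob_skew_module scale X" and "subspace S"
  shows "subspace ((X ^^ i) -` S)"
proof (rule subspaceI)
  have "(X ^^ i) 0 = 0"
    using funpow_frob_add[OF assms(1), of i 0 0] by simp
  then show "0 \<in> (X ^^ i) -` S" using subspace_0[OF assms(2)] by simp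
qed (simp_all add: funpow_frob_add[OF assms(1)] funpow_frob_scale[OF assms(1)]
       subspace_add[OF assms(2)] subspace_scale[OF assms(2)])

lemma subspace_annihilator: "subspace {g. r *s g = 0}"
proof (rule subspaceI)
  fix c g assume "g \<in> {g. r *s g = 0}"
  then show "c *s g \<in> {g. r *s g = 0}"
    by (simp only: mem_Collect_eq scale_left_commute[of r c g] scale_zero_right)
qed (simp_all add: scale_right_distrib)

lemma grann_span:
  assumes "frob_skew_module scale X"
  shows "grann scale X (span U) = grann scale X U"
proof
  show "grann scale X (span U) \<subseteq> grann scale X U"
    using span_superset unfolding grann_def by blast
next
  show "grann scale X U \<subseteq> grann scale X (span U)"
  proof
    fix \<theta> assume \<theta>: "\<theta> \<in> grann scale X U"
    have "span U \<subseteq> (X ^^ i) -` {g. \<theta> i *s g = 0}" for i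
    proof (rule span_minimal)
      show "U \<subseteq> (X ^^ i) -` {g. \<theta> i *s g = 0}"
        using \<theta> unfolding grann_def by blast
    qed (rule subspace_vimage_funpow_frob[OF assms subspace_annihilator])
    with \<theta> show "\<theta> \<in> grann scale X (span U)"
      unfolding grann_def by blast
  qed
qed

lemma skew_submodule_span_Union:
  assumes "frob_skew_module scale X" and "\<forall>N\<in>\<N>. skew_submodule scale X N"
  shows "skew_submodule scale X (span (\<Union>\<N>))"
proof -
  have "X g \<in> span (\<Union>\<N>)" if g: "g \<in> \<Union>\<N>" for g
  proof -
    obtain N where "N \<in> \<N>" and "g \<in> N" using g by blast
    with assms(2) have "X g \<in> N" unfolding skew_submodule_def by blast
    with \<open>N \<in> \<N>\<close> show ?thesis by (blast intro: span_base)
  qed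
  then have "\<Union>\<N> \<subseteq> X -` span (\<Union>\<N>)" by blast
  moreover have "subspace (X -` span (\<Union>\<N>))"
    using subspace_vimage_funpow_frob[OF assms(1) subspace_span, of 1] by simp
  ultimately have "span (\<Union>\<N>) \<subseteq> X -` span (\<Union>\<N>)"
    by (rule span_minimal)
  then show ?thesis
    unfolding skew_submodule_def using subspace_span by blast
qed

lemma grann_UN_graded_ideal_of:
  assumes "\<forall>i\<in>I. grann scale X (N i) = graded_ideal_of (b i)"
  shows "grann scale X (\<Union>i\<in>I. N i) = graded_ideal_of (\<lambda>n. \<Inter>i\<in>I. b i n)"
proof -
  have "\<theta> \<in> grann scale X (\<Union>i\<in>I. N i) \<longleftrightarrow> skew_poly \<theta> \<and> (\<forall>i\<in>I. \<theta> \<in> grann scale X (N i))"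
    for \<theta> unfolding grann_def by blast
  with assms show ?thesis
    unfolding graded_ideal_of_def by auto
qed

lemma special_ideals_Inter:
  assumes "frob_skew_module scale X" and "T \<subseteq> special_ideals scale X"
  shows "\<Inter>T \<in> special_ideals scale X"
proof -
  obtain N where N: "\<And>b. b \<in> T \<Longrightarrow>
      skew_submodule scale X (N b) \<and> grann scale X (N b) = graded_ideal_of (\<lambda>_. b)"
    using assms(2) unfolding special_ideals_def by (simp add: subset_iff, metis)
  have "skew_submodule scale X (span (\<Union>b\<in>T. N b))"
    using skew_submodule_span_Union[OF assms(1), of "N ` T"] N by blast
  moreover have "grann scale X (span (\<Union>b\<in>T. N b)) = graded_ideal_of (\<lambda>_. \<Inter>T)"
    using grann_UN_graded_ideal_of[where I=T and N=N and b="\<lambda>b _. b"] N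
    by (simp add: grann_span[OF assms(1)])
  moreover have "is_ideal (\<Inter>T)"
    using assms(2) is_ideal_Inter unfolding special_ideals_def by blast
  ultimately show ?thesis
    unfolding special_ideals_def by blast
qed

end

theorem corollary1p12:
  fixes smul :: "'a::comm_ring_1 \<Rightarrow> 'g::ab_group_add \<Rightarrow> 'g"
    and X :: "'g \<Rightarrow> 'g"
  assumes "noetherian_ring TYPE('a)"
    and "prime CHAR('a)"
    and "frob_skew_module smul X"
    and "x_torsion_free X"
  shows "(\<forall>S. S \<subseteq> special_ann_submodules smul X \<longrightarrow> \<Inter>S \<in> special_ann_submodules smul X)
       \<and> (\<forall>T. T \<subseteq> special_ideals smul X \<longrightarrow> \<Inter>T \<in> special_ideals smul X)"
proof -
  \<comment> \<open>Only the module structure is used: both closure properties hold for every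
    \<open>R[x,f]\<close>-module, so the remaining hypotheses are deliberately unused.\<close>
  interpret module smul
    using assms(3) unfolding frob_skew_module_def by blast
  show ?thesis
    using special_ann_submodules_Inter special_ideals_Inter[OF assms(3)] by simp
qed

end
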